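(* Let $n\ge 1$, $c>0$, $m$, $\hbar\neq 0$ be constants and let $\omega^0,\omega^1\in(-\pi/2,\pi/2]$. Let $a_\ast$ be a nowhere vanishing, differentiable complex-valued function of $t\in\mathbb{R}$ such that $\theta:=\arg a_\ast(t)$ is a constant independent of $t$. Put $C_0:=2me^{i\omega^0}/\hbar$. Let $V_0$ and $V_0'$ be functions on $\mathbb{C}$ such that $$\partial_t V_0(\psi)=\mathrm{Re}\,\big(\partial_t\overline{\psi}\,V_0'(\psi)\big)$$ for every function $\psi=\psi(t,x)$. Assume $C_0\in\mathbb{R}$ and $e^{2i(\theta+\omega^1)}/e^{2i\omega^0}\in\mathbb{R}$. Let $\phi_\ast=\phi_\ast(t,x)$, $(t,x)\in\mathbb{R}\times\mathbb{R}^n$, be a complex-valued solution of $$-\frac{1}{c^2}\frac{e^{2i(\theta+\omega^1)}}{e^{2i\omega^0}}\left(\partial_t^2+\frac{n\,\partial_t a_\ast}{a_\ast}\partial_t+\Big(\frac{mc^2e^{i\omega^0}}{\hbar}\Big)^2\right)\phi_\ast+\frac{1}{|a_\ast|^2}\Delta_x\phi_\ast-V_0'(\phi_\ast)=0,$$ where $\Delta_x=\sum_{j=1}^n\partial^2/(\partial x^j)^2$, which is sufficiently smooth and decays at spatial infinity so that all integrals below are finite and integrals over $\mathbb{R}^n$ of spatial divergences vanish. Then for every $t$, $$\int_{\mathbb{R}^n}e^0(t,x)\,dx+\int_0^t\int_{\mathbb{R}^n}e^{n+1}(s,x)\,dx\,ds=\int_{\mathbb{R}^n}e^0(0,x)\,dx,$$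 where $$e^0:=\frac{e^{2i(\theta+\omega^1)}}{c^2e^{2i\omega^0}}\left(|\partial_t\phi_\ast|^2+\frac{C_0^2c^4}{4}|\phi_\ast|^2\right)+\frac{1}{|a_\ast|^2}\sum_{j=1}^n|\partial_{x^j}\phi_\ast|^2+2V_0(\phi_\ast)$$ and $$e^{n+1}:=\frac{e^{2i(\theta+\omega^1)}}{c^2e^{2i\omega^0}}\,2\,\mathrm{Re}\Big(\frac{n\,\partial_t a_\ast}{a_\ast}\Big)|\partial_t\phi_\ast|^2-\partial_t\Big(\frac{1}{|a_\ast|^2}\Big)\sum_{j=1}^n|\partial_{x^j}\phi_\ast|^2.$$
   Context: Here $a_\ast$ plays the role of a (complex) scale-function of space; $t$ is a real time variable and $x=(x^1,\dots,x^n)\in\mathbb{R}^n$. *)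

theory Defs
  imports "HOL-Analysis.Analysis"
begin

definition pt :: "(real \<Rightarrow> 'a \<Rightarrow> 'b::real_normed_vector) \<Rightarrow> real \<Rightarrow> 'a \<Rightarrow> 'b" where
  "pt f t x = vector_derivative (\<lambda>s. f s x) (at t)"

definition px :: "'n::finite \<Rightarrow> (real \<Rightarrow> real^'n \<Rightarrow> 'b::real_normed_vector) \<Rightarrow> real \<Rightarrow> real^'n \<Rightarrow> 'b" where
  "px j f t x = vector_derivative (\<lambda>h. f t (x + h *\<^sub>R axis j 1)) (at 0)"

definition lap :: "(real \<Rightarrow> real^'n::finite \<Rightarrow> 'b::real_normed_vector) \<Rightarrow> real \<Rightarrow> real^'n \<Rightarrow> 'b" where
  "lap f t x = (\<Sum>j\<in>UNIV. px j (px j f) t x)"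

definition C2 :: "('a::real_normed_vector \<Rightarrow> 'b::real_normed_vector) \<Rightarrow> bool" where
  "C2 f \<longleftrightarrow> (\<exists>D D2. (\<forall>p. (f has_derivative blinfun_apply (D p)) (at p)) \<and>
                     (\<forall>p. (D has_derivative blinfun_apply (D2 p)) (at p)) \<and>
                     continuous_on UNIV D2)"

text \<open>Energy density e^0. Here K stands for exp(2i(theta+omega1))/exp(2i omega0).\<close>
definition e0 :: "complex \<Rightarrow> real \<Rightarrow> complex \<Rightarrow> (real \<Rightarrow> complex) \<Rightarrow> (complex \<Rightarrow> complex)
                  \<Rightarrow> (real \<Rightarrow> real^'n::finite \<Rightarrow> complex) \<Rightarrow> real \<Rightarrow> real^'n \<Rightarrow> complex" where
  "e0 K c C0 a V0 \<phi> t x =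
     K / of_real (c^2) * (of_real ((cmod (pt \<phi> t x))^2) + C0^2 * of_real (c^4) / 4 * of_real ((cmod (\<phi> t x))^2))
     + of_real (1 / (cmod (a t))^2) * of_real (\<Sum>j\<in>UNIV. (cmod (px j \<phi> t x))^2)
     + 2 * V0 (\<phi> t x)"

definition e1 :: "complex \<Rightarrow> real \<Rightarrow> (real \<Rightarrow> complex)
                  \<Rightarrow> (real \<Rightarrow> real^'n::finite \<Rightarrow> complex) \<Rightarrow> real \<Rightarrow> real^'n \<Rightarrow> complex" where
  "e1 K c a \<phi> t x =
     K / of_real (c^2) * 2 * of_real (Re (of_nat CARD('n) * vector_derivative a (at t) / a t))
        * of_real ((cmod (pt \<phi> t x))^2)
     - of_real (vector_derivative (\<lambda>s. 1 / (cmod (a s))^2) (at t)) * of_real (\<Sum>j\<in>UNIV. (cmod (px j \<phi> t x))^2)"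

definition oint :: "real \<Rightarrow> real \<Rightarrow> (real \<Rightarrow> 'b::euclidean_space) \<Rightarrow> 'b" where
  "oint a b f = (if a \<le> b then integral {a..b} f else - integral {b..a} f)"

end

theory Submission
  imports Defs
begin

text \<open>Differentiate e0 in time and eliminate V0'(\<phi>) by the field equation. Since K and C0
  are real, the products of \<partial>_t\<phi> with \<partial>_t^2\<phi> and with the mass term cancel, and what remains
  is -e1 plus 2/|a|^2 times the spatial divergence \<Sum>_j \<partial>_j Re (conj (\<partial>_j\<phi>) \<partial>_t\<phi>), where
  \<partial>_t\<partial>_j\<phi> = \<partial>_j\<partial>_t\<phi> by Schwarz's theorem. The divergence integrates to zero over space, so
  the time derivative of the total energy is minus the total of e1, and the fundamental theorem
  of calculus gives the balance law.\<close>

lemma derivative_linearization_on_ball: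
  fixes D :: "'a::real_normed_vector \<Rightarrow> 'b::real_normed_vector"
  assumes dD: "\<And>q. (D has_derivative blinfun_apply (D2 q)) (at q)"
    and cont: "continuous (at p) D2" and e: "e > 0"
  obtains d where "d > 0" "\<And>a b. a \<in> ball p d \<Longrightarrow> b \<in> ball p d \<Longrightarrow>
      norm (D b - D a - D2 p (b - a)) \<le> norm (b - a) * e"
proof -
  obtain d where d: "d > 0" "\<And>x. dist x p < d \<Longrightarrow> dist (D2 x) (D2 p) < e"
    using cont e unfolding continuous_at_eps_delta by metis
  have "norm (D b - D a - D2 p (b - a)) \<le> norm (b - a) * e"
    if "a \<in> ball p d" "b \<in> ball p d" for a b
  proof (rule differentiable_bound_linearization[where S="ball p d" and f'="\<lambda>x. blinfun_apply (D2 x)"])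
    show "a + t *\<^sub>R (b - a) \<in> ball p d" if "t \<in> {0..1}" for t
      using convex_ball[of p d, unfolded convex_alt] that \<open>a \<in> _\<close> \<open>b \<in> _\<close>
      by (metis (no_types, lifting) atLeastAtMost_iff add.commute diff_add_cancel scaleR_collapse
          scaleR_right_diff_distrib add_diff_eq)
    show "(D has_derivative blinfun_apply (D2 x)) (at x within ball p d)" for x
      using dD has_derivative_at_withinI by blast
    show "onorm (blinfun_apply (D2 x) - blinfun_apply (D2 p)) \<le> e" if "x \<in> ball p d" for x
    proof -
      have "blinfun_apply (D2 x) - blinfun_apply (D2 p) = blinfun_apply (D2 x - D2 p)"
        by (auto simp: fun_diff_def blinfun.diff_left)
      moreover have "norm (D2 x - D2 p) < e"
        using d(2)[of x] that by (simp add: dist_norm norm_minus_commute)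
      ultimately show ?thesis by (simp add: norm_blinfun.rep_eq)
    qed
  qed (use d in simp)
  then show ?thesis using that d by blast
qed

lemma has_derivative_along_line:
  assumes "\<And>q. (F has_derivative F' q) (at q)"
  shows "((\<lambda>s. F (a + s *\<^sub>R v)) has_derivative (\<lambda>r. r *\<^sub>R F' (a + s *\<^sub>R v) v)) (at s within S)"
proof -
  have "((\<lambda>s. a + s *\<^sub>R v) has_derivative (\<lambda>r. r *\<^sub>R v)) (at s within S)"
    by (auto intro!: derivative_eq_intros)
  from has_derivative_compose[OF this has_derivative_at_withinI[OF assms]]
  show ?thesis by (simp add: linear_scale[OF has_derivative_linear[OF assms]])
qed

lemma has_vector_derivative_along_line:
  assumes "\<And>q. (F has_derivative F' q) (at q)"
  shows "((\<lambda>s. F (a + s *\<^sub>R v)) has_vector_derivative F' (a + s *\<^sub>R v) v) (at s)"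
  using has_derivative_along_line[OF assms] unfolding has_vector_derivative_def by blast

lemma mixed_slope_estimate:
  fixes D :: "'a::real_normed_vector \<Rightarrow> ('a \<Rightarrow>\<^sub>L 'b::real_normed_vector)"
    and L :: "'a \<Rightarrow>\<^sub>L 'a \<Rightarrow>\<^sub>L 'b"
  assumes lin: "\<And>a b. a \<in> ball p d \<Longrightarrow> b \<in> ball p d \<Longrightarrow>
      norm (D b - D a - L (b - a)) \<le> norm (b - a) * e"
    and h: "\<bar>h\<bar> * (norm u + norm v) < d" and s: "\<bar>s\<bar> \<le> \<bar>h\<bar>"
  shows "norm (D (p + h *\<^sub>R u + s *\<^sub>R v) v - D (p + s *\<^sub>R v) v - L (h *\<^sub>R u) v)
    \<le> \<bar>h\<bar> * norm u * e * norm v"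
proof -
  have "norm (h *\<^sub>R u + s *\<^sub>R v) \<le> \<bar>h\<bar> * (norm u + norm v)"
    using norm_triangle_ineq[of "h *\<^sub>R u" "s *\<^sub>R v"] s mult_right_mono[OF s, of "norm v"]
    by (simp add: distrib_left)
  moreover have "dist p (p + (h *\<^sub>R u + s *\<^sub>R v)) = norm (h *\<^sub>R u + s *\<^sub>R v)"
    by (metis add.right_neutral dist_add_cancel dist_0_norm)
  ultimately have "p + (h *\<^sub>R u + s *\<^sub>R v) \<in> ball p d"
    using h by simp
  then have b: "p + h *\<^sub>R u + s *\<^sub>R v \<in> ball p d"
    by (simp add: add.assoc)
  have "norm (s *\<^sub>R v) \<le> \<bar>h\<bar> * (norm u + norm v)"
    using mult_right_mono[OF s, of "norm v"] by (simp add: distrib_left add_increasing)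
  then have a: "p + s *\<^sub>R v \<in> ball p d"
    using h by (simp add: dist_norm)
  have "norm (D (p + h *\<^sub>R u + s *\<^sub>R v) - D (p + s *\<^sub>R v) - L (h *\<^sub>R u)) \<le> \<bar>h\<bar> * norm u * e"
    using lin[OF a b] by (simp add: algebra_simps)
  with norm_blinfun[of "D (p + h *\<^sub>R u + s *\<^sub>R v) - D (p + s *\<^sub>R v) - L (h *\<^sub>R u)" v]
  show ?thesis
    by (simp add: blinfun.diff_left) (meson mult_right_mono norm_ge_zero order_trans)
qed

lemma second_difference_estimate:
  fixes F :: "'a::real_normed_vector \<Rightarrow> 'b::real_normed_vector"
    and L :: "'a \<Rightarrow>\<^sub>L 'a \<Rightarrow>\<^sub>L 'b"
  assumes dF: "\<And>q. (F has_derivative blinfun_apply (D q)) (at q)"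
    and lin: "\<And>a b. a \<in> ball p d \<Longrightarrow> b \<in> ball p d \<Longrightarrow>
      norm (D b - D a - L (b - a)) \<le> norm (b - a) * e"
    and h: "\<bar>h\<bar> * (norm u + norm v) < d"
  shows "norm ((F (p + h *\<^sub>R u + h *\<^sub>R v) - F (p + h *\<^sub>R u) - F (p + h *\<^sub>R v) + F p)
            - h\<^sup>2 *\<^sub>R L u v) \<le> 3 * e * h\<^sup>2 * norm u * norm v"
proof -
  define f where "f s = F (p + h *\<^sub>R u + s *\<^sub>R v) - F (p + s *\<^sub>R v)" for s
  define f' where "f' s = (\<lambda>r::real. r *\<^sub>R (D (p + h *\<^sub>R u + s *\<^sub>R v) v - D (p + s *\<^sub>R v) v))" for s
  define \<delta> where "\<delta> s = D (p + h *\<^sub>R u + s *\<^sub>R v) v - D (p + s *\<^sub>R v) v - L (h *\<^sub>R u) v" for s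
  let ?S = "closed_segment 0 h"
  have \<delta>: "norm (\<delta> s) \<le> \<bar>h\<bar> * norm u * e * norm v" if "s \<in> ?S" for s
  proof -
    have "\<bar>s\<bar> \<le> \<bar>h\<bar>"
      using that by (auto simp: closed_segment_eq_real_ivl split: if_splits)
    from mixed_slope_estimate[where p=p, OF lin h this] show ?thesis
      unfolding \<delta>_def .
  qed
  have mvt: "norm (f h - f 0 - f' 0 (h - 0)) \<le> norm (h - 0) * (2 * (\<bar>h\<bar> * norm u * e * norm v))"
  proof (rule differentiable_bound_linearization[where S="?S"])
    show "(f has_derivative f' x) (at x within ?S)" for x
      unfolding f_def f'_def
      using has_derivative_diff[OF has_derivative_along_line[OF dF, of "p + h *\<^sub>R u" v x ?S]
          has_derivative_along_line[OF dF, of p v x ?S]]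
      by (simp add: scaleR_diff_right)
    show "onorm (f' x - f' 0) \<le> 2 * (\<bar>h\<bar> * norm u * e * norm v)" if "x \<in> ?S" for x
    proof (rule onorm_le)
      fix r :: real
      have "norm ((f' x - f' 0) r) = \<bar>r\<bar> * norm (\<delta> x - \<delta> 0)"
        by (simp add: f'_def \<delta>_def scaleR_diff_right[symmetric])
      also have "\<dots> \<le> \<bar>r\<bar> * (\<bar>h\<bar> * norm u * e * norm v + \<bar>h\<bar> * norm u * e * norm v)"
        by (intro mult_left_mono order_trans[OF norm_triangle_ineq4] add_mono \<delta> that) auto
      finally show "norm ((f' x - f' 0) r) \<le> 2 * (\<bar>h\<bar> * norm u * e * norm v) * norm r"
        by (simp add: mult_ac)
    qed
  qed (auto simp: closed_segment_def)
  have "(F (p + h *\<^sub>R u + h *\<^sub>R v) - F (p + h *\<^sub>R u) - F (p + h *\<^sub>R v) + F p) - h\<^sup>2 *\<^sub>R L u v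
     = (f h - f 0 - f' 0 (h - 0)) + h *\<^sub>R \<delta> 0"
    by (simp add: f_def f'_def \<delta>_def blinfun.scaleR_left blinfun.scaleR_right power2_eq_square algebra_simps)
  then have "norm ((F (p + h *\<^sub>R u + h *\<^sub>R v) - F (p + h *\<^sub>R u) - F (p + h *\<^sub>R v) + F p) - h\<^sup>2 *\<^sub>R L u v)
      \<le> norm (f h - f 0 - f' 0 (h - 0)) + norm (h *\<^sub>R \<delta> 0)"
    by (simp only: norm_triangle_ineq)
  also have "\<dots> \<le> \<bar>h\<bar> * (2 * (\<bar>h\<bar> * norm u * e * norm v)) + \<bar>h\<bar> * (\<bar>h\<bar> * norm u * e * norm v)"
    using mvt \<delta>[of 0] by (intro add_mono) (simp_all add: mult_left_mono)
  also have "\<dots> = 3 * e * h\<^sup>2 * norm u * norm v"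
    by (simp add: power2_eq_square abs_mult_self_eq algebra_simps)
  finally show ?thesis .
qed

text \<open>Schwarz's argument: the second difference
  F(p + hu + hv) - F(p + hu) - F(p + hv) + F(p), which is symmetric in u and v and equals
  h^2 D2 p u v up to o(h^2).\<close>
lemma second_derivative_asymmetry_bound:
  fixes F :: "'a::real_normed_vector \<Rightarrow> 'b::real_normed_vector"
  assumes dF: "\<And>q. (F has_derivative blinfun_apply (D q)) (at q)"
    and dD: "\<And>q. (D has_derivative blinfun_apply (D2 q)) (at q)"
    and cont: "continuous (at p) D2" and e: "e > 0"
  shows "norm (D2 p u v - D2 p v u) \<le> 6 * e * norm u * norm v"
proof -
  obtain d where d: "d > 0" and lin: "\<And>a b. a \<in> ball p d \<Longrightarrow> b \<in> ball p d \<Longrightarrow>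
    norm (D b - D a - D2 p (b - a)) \<le> norm (b - a) * e"
    using derivative_linearization_on_ball[OF dD cont e] by metis
  define N where "N = norm u + norm v + 1"
  define h where "h = d / (2 * N)"
  have N: "N > 0" "norm u + norm v < N"
    using norm_ge_zero[of u] norm_ge_zero[of v] unfolding N_def by linarith+
  have h: "h > 0" "\<bar>h\<bar> * (norm u + norm v) < d"
  proof -
    show "h > 0"
      using d N by (simp add: h_def)
    then have "\<bar>h\<bar> * (norm u + norm v) < h * N"
      using N by simp
    also have "h * N = d / 2"
      using N by (simp add: h_def)
    finally show "\<bar>h\<bar> * (norm u + norm v) < d"
      using d by linarith
  qed
  define G where "G = F (p + h *\<^sub>R u + h *\<^sub>R v) - F (p + h *\<^sub>R u) - F (p + h *\<^sub>R v) + F p"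
  have G_swap: "G = F (p + h *\<^sub>R v + h *\<^sub>R u) - F (p + h *\<^sub>R v) - F (p + h *\<^sub>R u) + F p"
    unfolding G_def by (simp add: algebra_simps)
  have "\<bar>h\<bar> * (norm v + norm u) < d"
    using h(2) by (simp add: add.commute)
  from second_difference_estimate[where p=p, OF dF lin this]
  have vu: "norm (G - h\<^sup>2 *\<^sub>R D2 p v u) \<le> 3 * e * h\<^sup>2 * norm v * norm u"
    unfolding G_swap .
  have uv: "norm (G - h\<^sup>2 *\<^sub>R D2 p u v) \<le> 3 * e * h\<^sup>2 * norm u * norm v"
    unfolding G_def using second_difference_estimate[where p=p, OF dF lin h(2)] .
  have "h\<^sup>2 * norm (D2 p u v - D2 p v u) = norm ((G - h\<^sup>2 *\<^sub>R D2 p v u) - (G - h\<^sup>2 *\<^sub>R D2 p u v))"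
    by (simp add: algebra_simps flip: scaleR_diff_right)
  also have "\<dots> \<le> 3 * e * h\<^sup>2 * norm v * norm u + 3 * e * h\<^sup>2 * norm u * norm v"
    using norm_triangle_ineq4 vu uv by (rule order_trans[OF _ add_mono])
  also have "\<dots> = h\<^sup>2 * (6 * e * norm u * norm v)"
    by (simp add: algebra_simps)
  finally show ?thesis using h(1) by simp
qed

lemma second_derivative_symmetric:
  fixes F :: "'a::real_normed_vector \<Rightarrow> 'b::real_normed_vector"
  assumes dF: "\<And>q. (F has_derivative blinfun_apply (D q)) (at q)"
    and dD: "\<And>q. (D has_derivative blinfun_apply (D2 q)) (at q)"
    and cont: "continuous (at p) D2"
  shows "D2 p u v = D2 p v u"
proof -
  let ?X = "D2 p u v - D2 p v u"
  have m: "norm u * norm v + 1 > 0"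
    using mult_nonneg_nonneg[OF norm_ge_zero norm_ge_zero, of u v] by linarith
  have "norm ?X \<le> 0 + e" if "e > 0" for e
  proof -
    have "norm ?X \<le> 6 * (e / (6 * (norm u * norm v + 1))) * norm u * norm v"
      using that m by (intro second_derivative_asymmetry_bound[OF dF dD cont]) simp
    also have "\<dots> \<le> e"
      using that m by (simp add: field_simps)
    finally show ?thesis by simp
  qed
  then show ?thesis using field_le_epsilon[of "norm ?X" 0] by simp
qed

lemma has_vector_derivative_pt:
  assumes "\<And>p. ((\<lambda>p. f (fst p) (snd p)) has_derivative f' p) (at p)"
  shows "((\<lambda>r. f r x) has_vector_derivative f' (r, x) (1, 0)) (at r)"
  using has_vector_derivative_along_line[OF assms, of "(0, x)" "(1, 0)"] by simp

lemma has_vector_derivative_px: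
  assumes "\<And>p. ((\<lambda>p. f (fst p) (snd p)) has_derivative f' p) (at p)"
  shows "((\<lambda>h. f s (x + h *\<^sub>R axis j 1)) has_vector_derivative
           f' (s, x + h *\<^sub>R axis j 1) (0, axis j 1)) (at h)"
  using has_vector_derivative_along_line[OF assms, of "(s, x)" "(0, axis j 1)"] by simp

lemma pt_eq_derivative:
  assumes "\<And>p. ((\<lambda>p. f (fst p) (snd p)) has_derivative f' p) (at p)"
  shows "pt f r x = f' (r, x) (1, 0)"
  unfolding pt_def by (rule vector_derivative_at[OF has_vector_derivative_pt[OF assms]])

lemma px_eq_derivative:
  assumes "\<And>p. ((\<lambda>p. f (fst p) (snd p)) has_derivative f' p) (at p)"
  shows "px j f s x = f' (s, x) (0, axis j 1)"
  unfolding px_def using vector_derivative_at[OF has_vector_derivative_px[OF assms, of s x j 0]]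
  by simp

text \<open>The last claim differentiates \<partial>_t f in x_j but names the result \<partial>_t \<partial>_j f: this is
  the symmetry of the second derivative.\<close>
lemma C2_partial_derivatives:
  fixes f :: "real \<Rightarrow> real^'n::finite \<Rightarrow> 'b::real_normed_vector"
  assumes "C2 (\<lambda>p. f (fst p) (snd p))"
  shows "((\<lambda>r. f r x) has_vector_derivative pt f r x) (at r)"
    and "((\<lambda>r. pt f r x) has_vector_derivative pt (pt f) r x) (at r)"
    and "((\<lambda>r. px j f r x) has_vector_derivative pt (px j f) r x) (at r)"
    and "((\<lambda>h. px j f s (x + h *\<^sub>R axis j 1)) has_vector_derivative px j (px j f) s x) (at 0)"
    and "((\<lambda>h. pt f s (x + h *\<^sub>R axis j 1)) has_vector_derivative pt (px j f) s x) (at 0)"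
proof -
  obtain D D2 where dD: "\<And>p. ((\<lambda>p. f (fst p) (snd p)) has_derivative blinfun_apply (D p)) (at p)"
    and dD2: "\<And>p. (D has_derivative blinfun_apply (D2 p)) (at p)"
    and cD2: "continuous_on UNIV D2"
    using assms unfolding C2_def by blast
  define \<tau> :: "real \<times> (real^'n)" where "\<tau> = (1, 0)"
  define \<sigma> :: "real \<times> (real^'n)" where "\<sigma> = (0, axis j 1)"
  have d_pt: "((\<lambda>p. pt f (fst p) (snd p)) has_derivative (\<lambda>w. D2 p w \<tau>)) (at p)" for p
    unfolding pt_eq_derivative[OF dD] \<tau>_def
    using bounded_linear.has_derivative[OF blinfun.bounded_linear_left dD2] by simp
  have d_px: "((\<lambda>p. px j f (fst p) (snd p)) has_derivative (\<lambda>w. D2 p w \<sigma>)) (at p)" for p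
    unfolding px_eq_derivative[OF dD] \<sigma>_def
    using bounded_linear.has_derivative[OF blinfun.bounded_linear_left dD2] by simp
  have sym: "D2 p \<sigma> \<tau> = D2 p \<tau> \<sigma>" for p
    using cD2 by (intro second_derivative_symmetric[OF dD dD2]) (simp add: continuous_on_eq_continuous_at del: split_paired_All)
  show "((\<lambda>r. f r x) has_vector_derivative pt f r x) (at r)"
    unfolding pt_eq_derivative[OF dD] by (rule has_vector_derivative_pt[OF dD])
  show "((\<lambda>r. pt f r x) has_vector_derivative pt (pt f) r x) (at r)"
    unfolding pt_eq_derivative[OF d_pt] by (rule has_vector_derivative_pt[OF d_pt])
  show "((\<lambda>r. px j f r x) has_vector_derivative pt (px j f) r x) (at r)"
    unfolding pt_eq_derivative[OF d_px] by (rule has_vector_derivative_pt[OF d_px])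
  show "((\<lambda>h. px j f s (x + h *\<^sub>R axis j 1)) has_vector_derivative px j (px j f) s x) (at 0)"
    using has_vector_derivative_px[OF d_px, of s x j 0] by (simp add: px_eq_derivative[OF d_px] \<sigma>_def)
  show "((\<lambda>h. pt f s (x + h *\<^sub>R axis j 1)) has_vector_derivative pt (px j f) s x) (at 0)"
    using has_vector_derivative_px[OF d_pt, of s x j 0]
    by (simp add: pt_eq_derivative[OF d_px] \<sigma>_def \<tau>_def sym[unfolded \<sigma>_def \<tau>_def])
qed

lemma closed_range_scaleR_left:
  fixes v :: "'b::real_normed_vector"
  assumes "v \<noteq> 0"
  shows "closed (range (\<lambda>r::real. r *\<^sub>R v))"
proof -
  have "complete (range (\<lambda>r::real. r *\<^sub>R v))"
    using assms by (intro complete_isometric_image[where e="norm v"])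
      (auto simp: bounded_linear_scaleR_left complete_UNIV)
  then show ?thesis
    by (rule complete_imp_closed)
qed

lemma tendsto_scaleR_left_cancel:
  fixes v :: "'b::real_normed_vector"
  assumes v: "v \<noteq> 0" and F: "F \<noteq> bot" and lim: "((\<lambda>p. X p *\<^sub>R v) \<longlongrightarrow> z) F"
  obtains r where "z = r *\<^sub>R v" "(X \<longlongrightarrow> r) F"
proof -
  have "z \<in> range (\<lambda>r::real. r *\<^sub>R v)"
    by (rule Lim_in_closed_set[OF closed_range_scaleR_left[OF v] _ F lim]) (intro always_eventually, auto)
  then obtain r where z: "z = r *\<^sub>R v"
    by auto
  have "(X \<longlongrightarrow> r) F"
  proof (rule tendstoI)
    fix e :: real
    assume "e > 0"
    with v have "e * norm v > 0"
      by simp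
    from tendstoD[OF lim this] show "\<forall>\<^sub>F p in F. dist (X p) r < e"
    proof (rule eventually_mono)
      fix p
      assume "dist (X p *\<^sub>R v) z < e * norm v"
      then have "\<bar>X p - r\<bar> * norm v < e * norm v"
        by (simp add: z dist_norm flip: scaleR_diff_left)
      with v show "dist (X p) r < e"
        by (simp add: dist_real_def)
    qed
  qed
  with z that show ?thesis
    by blast
qed

lemma has_integral_scaleR_left_cancel_cbox:
  fixes v :: "'b::real_normed_vector" and g :: "'n::euclidean_space \<Rightarrow> real"
  assumes v: "v \<noteq> 0" and "((\<lambda>x. g x *\<^sub>R v) has_integral z) (cbox a b)"
  obtains r where "z = r *\<^sub>R v" "(g has_integral r) (cbox a b)"
proof -
  have "((\<lambda>p. (\<Sum>(x,k)\<in>p. Henstock_Kurzweil_Integration.content k *\<^sub>R g x) *\<^sub>R v) \<longlongrightarrow> z) (division_filter (cbox a b))"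
    using assms(2) unfolding has_integral_cbox by (simp add: scaleR_sum_left split_beta')
  from tendsto_scaleR_left_cancel[OF v division_filter_not_empty this] that show ?thesis
    unfolding has_integral_cbox by blast
qed

lemma has_integral_scaleR_left_zero_cancel:
  fixes v :: "'b::real_normed_vector" and g :: "'n::euclidean_space \<Rightarrow> real"
  assumes v: "v \<noteq> 0" and h: "((\<lambda>x. g x *\<^sub>R v) has_integral 0) UNIV"
  shows "(g has_integral 0) UNIV"
proof (cases "\<exists>a b. (UNIV :: 'n set) = cbox a b")
  case True
  then obtain a b where ab: "(UNIV :: 'n set) = cbox a b"
    by blast
  from has_integral_scaleR_left_cancel_cbox[OF v h[unfolded ab]] v show ?thesis
    unfolding ab by auto
next
  case False
  show ?thesis
  proof (subst has_integral_alt, simp only: False if_False, intro allI impI)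
    fix e :: real
    assume "e > 0"
    with v have "e * norm v > 0"
      by simp
    from has_integral_altD[OF h False this] obtain B where B: "B > 0"
      "\<forall>a b. ball 0 B \<subseteq> cbox a b \<longrightarrow> (\<exists>z. ((\<lambda>x. if x \<in> UNIV then g x *\<^sub>R v else 0)
         has_integral z) (cbox a b) \<and> norm (z - 0) < e * norm v)"
      by blast
    show "\<exists>B>0. \<forall>a b. ball 0 B \<subseteq> cbox a b \<longrightarrow>
        (\<exists>z. ((\<lambda>x. if x \<in> UNIV then g x else 0) has_integral z) (cbox a b) \<and> norm (z - 0) < e)"
    proof (rule exI[of _ B], intro conjI allI impI)
      fix a b :: 'n
      assume "ball 0 B \<subseteq> cbox a b"
      then have "\<exists>z. ((\<lambda>x. g x *\<^sub>R v) has_integral z) (cbox a b) \<and> norm z < e * norm v"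
        using B(2) by simp
      then obtain z where z: "((\<lambda>x. g x *\<^sub>R v) has_integral z) (cbox a b)" "norm z < e * norm v"
        by blast
      from has_integral_scaleR_left_cancel_cbox[OF v z(1)] obtain r
        where r: "z = r *\<^sub>R v" "(g has_integral r) (cbox a b)" .
      from z(2) v have "\<bar>r\<bar> < e"
        unfolding r(1) by simp
      with r(2) show "\<exists>z. ((\<lambda>x. if x \<in> UNIV then g x else 0) has_integral z) (cbox a b) \<and> norm (z - 0) < e"
        by auto
    qed (use B in auto)
  qed
qed

lemma has_integral_of_real_zero_cancel:
  fixes g :: "'n::euclidean_space \<Rightarrow> real"
  assumes "((\<lambda>x. of_real (g x) :: 'b::{real_normed_vector, real_algebra_1}) has_integral 0) UNIV"
  shows "(g has_integral 0) UNIV"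
proof (rule has_integral_scaleR_left_zero_cancel)
  show "(1::'b) \<noteq> 0"
    by simp
  show "((\<lambda>x. g x *\<^sub>R (1::'b)) has_integral 0) UNIV"
    using assms by (simp only: of_real_def)
qed

lemma px_Re_cnj_mult:
  fixes f g :: "real \<Rightarrow> real^'n::finite \<Rightarrow> complex"
  assumes "((\<lambda>h. g s (x + h *\<^sub>R axis j 1)) has_vector_derivative g') (at 0)"
    and "((\<lambda>h. f s (x + h *\<^sub>R axis j 1)) has_vector_derivative f') (at 0)"
  shows "px j (\<lambda>r y. of_real (Re (cnj (g r y) * f r y))) s x
           = (of_real (Re (cnj g' * f s x + cnj (g s x) * f')) :: 'b::{real_normed_vector, real_algebra_1})"
proof -
  have "((\<lambda>h. cnj (g s (x + h *\<^sub>R axis j 1)) * f s (x + h *\<^sub>R axis j 1)) has_vector_derivative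
      cnj (g s x) * f' + cnj g' * f s x) (at 0)"
    using has_vector_derivative_mult[OF has_vector_derivative_cnj[OF assms(1)] assms(2)] by simp
  from bounded_linear.has_vector_derivative[OF
      bounded_linear_compose[OF bounded_linear_scaleR_left[of "1::'b"] bounded_linear_Re] this,
      unfolded add.commute[of "cnj (g s x) * f'"]]
  show ?thesis
    unfolding px_def of_real_def by (rule vector_derivative_at)
qed

lemma divergence_Re_cnj_px_pt:
  fixes \<phi> :: "real \<Rightarrow> real^'n::finite \<Rightarrow> complex"
  assumes "C2 (\<lambda>p. \<phi> (fst p) (snd p))"
  shows "(\<Sum>j\<in>UNIV. px j (\<lambda>r y. of_real (Re (cnj (px j \<phi> r y) * pt \<phi> r y))) s x)
    = (of_real (\<Sum>j\<in>UNIV. Re (cnj (px j (px j \<phi>) s x) * pt \<phi> s x + cnj (px j \<phi> s x) * pt (px j \<phi>) s x))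
        :: 'b::{real_normed_vector, real_algebra_1})"
proof -
  have "px j (\<lambda>r y. of_real (Re (cnj (px j \<phi> r y) * pt \<phi> r y))) s x
      = (of_real (Re (cnj (px j (px j \<phi>) s x) * pt \<phi> s x + cnj (px j \<phi> s x) * pt (px j \<phi>) s x)) :: 'b)" for j
    by (rule px_Re_cnj_mult[where g="px j \<phi>" and f="pt \<phi>"]) (rule C2_partial_derivatives[OF assms])+
  then show ?thesis
    unfolding of_real_sum by (rule sum.cong[OF refl])
qed

text \<open>The variables stand for \<phi>, \<partial>_t\<phi>, \<partial>_t^2\<phi>, \<partial>_j\<phi>, \<partial>_t\<partial>_j\<phi>, \<partial>_j^2\<phi> (u, ut, utt, g, gt, gxx),
  for W = V0'(\<phi>), N = n a'/a, A = 1/|a|^2 and its derivative A'.\<close>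
lemma energy_density_identity:
  fixes K C0 N W ut utt u :: complex and k c0 c A A' :: real and g gt gxx :: "'j \<Rightarrow> complex"
  assumes K: "K = of_real k" and C0: "C0 = of_real c0"
    and W: "W = - (1 / of_real (c^2)) * K * (utt + N * ut + C0^2 * of_real (c^4) / 4 * u)
                + of_real A * (\<Sum>j\<in>J. gxx j)"
  shows "K / of_real (c^2) * (of_real (2 * Re (cnj utt * ut)) + C0^2 * of_real (c^4) / 4 * of_real (2 * Re (cnj ut * u)))
      + (of_real A * of_real (\<Sum>j\<in>J. 2 * Re (cnj (gt j) * g j)) + of_real A' * of_real (\<Sum>j\<in>J. (cmod (g j))\<^sup>2))
      + 2 * of_real (Re (cnj ut * W))
    = - (K / of_real (c^2) * 2 * of_real (Re N) * of_real ((cmod ut)\<^sup>2) - of_real A' * of_real (\<Sum>j\<in>J. (cmod (g j))\<^sup>2))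
      + 2 * of_real A * (\<Sum>j\<in>J. of_real (Re (cnj (gxx j) * ut + cnj (g j) * gt j)))"
proof -
  define \<kappa> where "\<kappa> = k / c^2"
  have ReW: "Re (cnj ut * W) = - \<kappa> * (Re (cnj ut * utt) + Re N * (cmod ut)\<^sup>2 + c0^2 * c^4 / 4 * Re (cnj ut * u))
      + A * (\<Sum>j\<in>J. Re (cnj ut * gxx j))"
    unfolding W K C0 cmod_power2 \<kappa>_def
    by (simp add: sum_distrib_left algebra_simps power2_eq_square add_divide_distrib diff_divide_distrib)
  have "\<kappa> * (2 * Re (cnj utt * ut) + c0^2 * c^4 / 4 * (2 * Re (cnj ut * u)))
      + (A * (\<Sum>j\<in>J. 2 * Re (cnj (gt j) * g j)) + A' * (\<Sum>j\<in>J. (cmod (g j))\<^sup>2))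
      + 2 * Re (cnj ut * W)
    = - (\<kappa> * 2 * Re N * (cmod ut)\<^sup>2 - A' * (\<Sum>j\<in>J. (cmod (g j))\<^sup>2))
      + 2 * A * (\<Sum>j\<in>J. Re (cnj (gxx j) * ut + cnj (g j) * gt j))"
    unfolding ReW by (simp add: sum.distrib sum_distrib_left field_simps)
  from arg_cong[OF this, of complex_of_real] show ?thesis
    unfolding K C0 \<kappa>_def by simp
qed

lemma has_vector_derivative_cmod_power2:
  fixes f :: "real \<Rightarrow> complex"
  assumes "(f has_vector_derivative f') (at s)"
  shows "((\<lambda>r. complex_of_real ((cmod (f r))\<^sup>2)) has_vector_derivative
           of_real (2 * Re (cnj f' * f s))) (at s)"
proof -
  have "((\<lambda>r. f r * cnj (f r)) has_vector_derivative f s * cnj f' + f' * cnj (f s)) (at s)"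
    by (intro has_vector_derivative_mult has_vector_derivative_cnj assms)
  moreover have "f s * cnj f' + f' * cnj (f s) = of_real (2 * Re (cnj f' * f s))"
    by (simp add: complex_eq_iff)
  moreover have "(\<lambda>r. complex_of_real ((cmod (f r))\<^sup>2)) = (\<lambda>r. f r * cnj (f r))"
    by (rule ext) (rule complex_norm_square)
  ultimately show ?thesis
    by simp
qed

lemma inverse_cmod_power2_differentiable:
  fixes a :: "real \<Rightarrow> complex"
  assumes "a differentiable (at s)" "a s \<noteq> 0"
  shows "(\<lambda>s. 1 / (cmod (a s))\<^sup>2) differentiable (at s)"
proof -
  have "(\<lambda>s. Re (a s)) differentiable (at s)" "(\<lambda>s. Im (a s)) differentiable (at s)"
    using assms(1) by (auto intro: differentiable_compose[OF bounded_linear_imp_differentiable]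
        bounded_linear_Re bounded_linear_Im)
  moreover have "(Re (a s))\<^sup>2 + (Im (a s))\<^sup>2 \<noteq> 0"
    using assms(2) by (simp add: complex_eq_iff)
  ultimately show ?thesis
    unfolding cmod_power2 by (intro differentiable_divide differentiable_add differentiable_power
        differentiable_const) auto
qed

lemma pt_e0:
  fixes \<phi> :: "real \<Rightarrow> real^'n::finite \<Rightarrow> complex"
  assumes smooth: "C2 (\<lambda>p. \<phi> (fst p) (snd p))"
    and a: "a differentiable (at s)" "a s \<noteq> 0"
    and V0: "((\<lambda>r. V0 (\<phi> r x)) has_vector_derivative
           of_real (Re (cnj (pt \<phi> s x) * V0' (\<phi> s x)))) (at s)"
  shows "pt (e0 K c C0 a V0 \<phi>) s x =
      K / of_real (c^2) * (of_real (2 * Re (cnj (pt (pt \<phi>) s x) * pt \<phi> s x))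
        + C0^2 * of_real (c^4) / 4 * of_real (2 * Re (cnj (pt \<phi> s x) * \<phi> s x)))
      + (of_real (1 / (cmod (a s))\<^sup>2) * of_real (\<Sum>j\<in>UNIV. 2 * Re (cnj (pt (px j \<phi>) s x) * px j \<phi> s x))
        + of_real (vector_derivative (\<lambda>s. 1 / (cmod (a s))\<^sup>2) (at s))
            * of_real (\<Sum>j\<in>UNIV. (cmod (px j \<phi> s x))\<^sup>2))
      + 2 * of_real (Re (cnj (pt \<phi> s x) * V0' (\<phi> s x)))" (is "_ = ?D")
proof -
  note \<phi>' = C2_partial_derivatives[OF smooth]
  have "((\<lambda>s. 1 / (cmod (a s))\<^sup>2) has_vector_derivative
      vector_derivative (\<lambda>s. 1 / (cmod (a s))\<^sup>2) (at s)) (at s)"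
    using inverse_cmod_power2_differentiable[OF a] vector_derivative_works by blast
  from bounded_linear.has_vector_derivative[OF bounded_linear_of_real this]
  have A: "((\<lambda>r. complex_of_real (1 / (cmod (a r))\<^sup>2)) has_vector_derivative
      of_real (vector_derivative (\<lambda>s. 1 / (cmod (a s))\<^sup>2) (at s))) (at s)" .
  have "((\<lambda>r. e0 K c C0 a V0 \<phi> r x) has_vector_derivative ?D) (at s)"
    unfolding e0_def of_real_sum
    by (intro has_vector_derivative_add has_vector_derivative_mult_right has_vector_derivative_mult
        has_vector_derivative_sum has_vector_derivative_cmod_power2 \<phi>' V0 A)
  then show ?thesis
    unfolding pt_def[of "e0 K c C0 a V0 \<phi>"] by (rule vector_derivative_at)
qed

lemma pt_e0_eq_flux:
  fixes \<phi> :: "real \<Rightarrow> real^'n::finite \<Rightarrow> complex"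
  assumes smooth: "C2 (\<lambda>p. \<phi> (fst p) (snd p))"
    and a: "a differentiable (at s)" "a s \<noteq> 0"
    and V0: "((\<lambda>r. V0 (\<phi> r x)) has_vector_derivative
           of_real (Re (cnj (pt \<phi> s x) * V0' (\<phi> s x)))) (at s)"
    and K: "K \<in> \<real>" and C0: "C0 \<in> \<real>"
    and equation: "V0' (\<phi> s x) = - (1 / of_real (c^2)) * K *
          (pt (pt \<phi>) s x + of_nat CARD('n) * vector_derivative a (at s) / a s * pt \<phi> s x
           + C0^2 * of_real (c^4) / 4 * \<phi> s x)
        + of_real (1 / (cmod (a s))\<^sup>2) * lap \<phi> s x"
  shows "pt (e0 K c C0 a V0 \<phi>) s x = - e1 K c a \<phi> s x + 2 * of_real (1 / (cmod (a s))\<^sup>2) *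
      of_real (\<Sum>j\<in>UNIV. Re (cnj (px j (px j \<phi>) s x) * pt \<phi> s x + cnj (px j \<phi> s x) * pt (px j \<phi>) s x))"
proof -
  obtain k c0 where "K = of_real k" "C0 = of_real c0"
    using K C0 by (auto elim!: Reals_cases)
  then have "pt (e0 K c C0 a V0 \<phi>) s x = - e1 K c a \<phi> s x + 2 * of_real (1 / (cmod (a s))\<^sup>2) *
      (\<Sum>j\<in>UNIV. of_real (Re (cnj (px j (px j \<phi>) s x) * pt \<phi> s x + cnj (px j \<phi> s x) * pt (px j \<phi>) s x)))"
    unfolding pt_e0[of \<phi> a s V0 x V0' K c C0, OF smooth a V0] e1_def
    by (intro energy_density_identity equation[unfolded lap_def])
  then show ?thesis
    unfolding of_real_sum .
qed

lemma oint_eq_of_has_vector_derivative: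
  fixes E F :: "real \<Rightarrow> 'a::euclidean_space"
  assumes "\<And>s. (E has_vector_derivative - F s) (at s)"
  shows "E t + oint 0 t F = E 0"
proof (cases "0 \<le> t")
  case True
  have "((\<lambda>s. - F s) has_integral E t - E 0) {0..t}"
    using assms True by (intro fundamental_theorem_of_calculus) (auto intro: has_vector_derivative_at_within)
  from has_integral_neg[OF this] show ?thesis
    using True by (simp add: oint_def integral_unique)
next
  case False
  have "((\<lambda>s. - F s) has_integral E 0 - E t) {t..0}"
    using assms False by (intro fundamental_theorem_of_calculus) (auto intro: has_vector_derivative_at_within)
  from has_integral_neg[OF this] show ?thesis
    using False by (simp add: oint_def integral_unique)
qed

theorem lemma6p1:
  fixes c :: real and m hbar :: complex and \<omega>0 \<omega>1 \<theta> :: real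
    and a :: "real \<Rightarrow> complex"
    and V0 V0' :: "complex \<Rightarrow> complex"
    and \<phi> :: "real \<Rightarrow> real^'n::finite \<Rightarrow> complex"
    and C0 K :: complex and t :: real
  assumes c_pos: "c > 0"
    and hbar_nz: "hbar \<noteq> 0"
    and om0: "- (pi/2) < \<omega>0" "\<omega>0 \<le> pi/2"
    and om1: "- (pi/2) < \<omega>1" "\<omega>1 \<le> pi/2"
    and a_nz: "\<forall>s. a s \<noteq> 0"
    and a_diff: "\<forall>s. a differentiable (at s)"
    and a_arg: "\<forall>s. Arg (a s) = \<theta>"
    and C0_def: "C0 = 2 * m * exp (\<i> * of_real \<omega>0) / hbar"
    and K_def: "K = exp (2 * \<i> * of_real (\<theta> + \<omega>1)) / exp (2 * \<i> * of_real \<omega>0)"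
    and V0_deriv: "\<forall>\<psi> :: real \<Rightarrow> complex. \<forall>s. \<psi> differentiable (at s) \<longrightarrow>
        ((\<lambda>r. V0 (\<psi> r)) has_vector_derivative
           of_real (Re (cnj (vector_derivative \<psi> (at s)) * V0' (\<psi> s)))) (at s)"
    and C0_real: "C0 \<in> \<real>"
    and K_real: "K \<in> \<real>"
    and equation: "\<forall>s x.
        - (1 / of_real (c^2)) * K *
          (pt (pt \<phi>) s x + of_nat CARD('n) * vector_derivative a (at s) / a s * pt \<phi> s x
           + (m * of_real (c^2) * exp (\<i> * of_real \<omega>0) / hbar)^2 * \<phi> s x)
        + of_real (1 / (cmod (a s))^2) * lap \<phi> s x - V0' (\<phi> s x) = 0"
    and smooth: "C2 (\<lambda>p :: real \<times> (real^'n). \<phi> (fst p) (snd p))"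
    and e0_int: "\<forall>s. e0 K c C0 a V0 \<phi> s integrable_on UNIV"
    and e1_int: "\<forall>s. e1 K c a \<phi> s integrable_on UNIV"
    and diff_under_int: "\<forall>s. ((\<lambda>r. integral UNIV (e0 K c C0 a V0 \<phi> r)) has_vector_derivative
                              integral UNIV (pt (e0 K c C0 a V0 \<phi>) s)) (at s)"
    and div_vanish: "\<forall>s. ((\<lambda>x. \<Sum>j\<in>UNIV.
              px j (\<lambda>r y. of_real (Re (cnj (px j \<phi> r y) * pt \<phi> r y))) s x) has_integral 0) UNIV"
  shows "integral UNIV (e0 K c C0 a V0 \<phi> t)
         + oint 0 t (\<lambda>s. integral UNIV (e1 K c a \<phi> s))
         = integral UNIV (e0 K c C0 a V0 \<phi> 0)"
proof -
  \<comment> \<open>Of the constants only the reality of K and C0 matters.\<close>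
  have mass: "(m * of_real (c^2) * exp (\<i> * of_real \<omega>0) / hbar)^2 = C0^2 * of_real (c^4) / 4"
    unfolding C0_def by (simp add: power_mult_distrib power_divide flip: power_mult)
  have V0: "((\<lambda>r. V0 (\<phi> r x)) has_vector_derivative
      of_real (Re (cnj (pt \<phi> s x) * V0' (\<phi> s x)))) (at s)" for s x
    using V0_deriv[rule_format, OF differentiableI_vector[OF C2_partial_derivatives(1)[OF smooth]]]
    unfolding pt_def .
  have V0': "V0' (\<phi> s x) = - (1 / of_real (c^2)) * K *
        (pt (pt \<phi>) s x + of_nat CARD('n) * vector_derivative a (at s) / a s * pt \<phi> s x
         + C0^2 * of_real (c^4) / 4 * \<phi> s x)
      + of_real (1 / (cmod (a s))^2) * lap \<phi> s x" for s x
    using equation[rule_format, of s x] unfolding mass right_minus_eq by (rule sym)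
  define divergence where "divergence s x = (\<Sum>j\<in>UNIV. Re (cnj (px j (px j \<phi>) s x) * pt \<phi> s x
      + cnj (px j \<phi> s x) * pt (px j \<phi>) s x))" for s x
  have pw: "pt (e0 K c C0 a V0 \<phi>) s
      = (\<lambda>x. - e1 K c a \<phi> s x + 2 * of_real (1 / (cmod (a s))\<^sup>2) * of_real (divergence s x))" for s
    unfolding divergence_def using a_diff a_nz
    by (intro ext pt_e0_eq_flux[of \<phi> a s V0 _ V0' K C0 c, OF smooth _ _ V0 K_real C0_real V0']) auto
  \<comment> \<open>div_vanish is stated in an unspecified real algebra of values, so transport it to \<complex>.\<close>
  have "((\<lambda>x. complex_of_real (divergence s x)) has_integral 0) UNIV" for s
    using has_integral_of_real[OF has_integral_of_real_zero_cancel[OF div_vanish[rule_format, of s,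
          unfolded divergence_Re_cnj_px_pt[OF smooth], folded divergence_def]]]
    by simp
  then have "(pt (e0 K c C0 a V0 \<phi>) s has_integral
      - integral UNIV (e1 K c a \<phi> s) + 2 * of_real (1 / (cmod (a s))\<^sup>2) * 0) UNIV" for s
    unfolding pw using e1_int
    by (intro has_integral_add has_integral_neg has_integral_mult_right integrable_integral) auto
  then have "integral UNIV (pt (e0 K c C0 a V0 \<phi>) s) = - integral UNIV (e1 K c a \<phi> s)" for s
    by (simp add: integral_unique)
  then show ?thesis
    using diff_under_int by (intro oint_eq_of_has_vector_derivative) simp
qed

end
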